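(* Let $(X,d)$ be a metric space, $E\subseteq X$, $x\in E$. The values of $$\underline{\delta}_E(x)=\liminf_{\lambda\to0}\liminf_{r\to0}\frac{\log n(\lambda r,E\cap\overline{B}(x,r))}{\log 1/\lambda},\qquad \overline{\delta}_E(x)=\limsup_{\lambda\to0}\limsup_{r\to0}\frac{\log n(\lambda r,E\cap\overline{B}(x,r))}{\log 1/\lambda}$$ do not change if $n$ is replaced by $\nu$ or by $\overline{n}$, or if $E\cap\overline{B}(x,r)$ is replaced by $E\cap B(x,r)$. Moreover, if $E$ is closed in $X$, they do not change if $E\cap\overline{B}(x,r)$ is replaced by $\overline{E\cap B(x,r)}$.
   Context: $B(x,r)$ is the open ball, $\overline{B}(x,r)=\{y:d(x,y)\le r\}$ the closed ball, and $\overline{A}$ denotes closure. For $A\subseteq X$: $n(r,A)$ (resp. $\overline{n}(r,A)$) is the minimum number of open (resp. closed) balls of radius $r$ necessary to cover $A$, and $\nu(r,A)$ is the maximum number of pairwise disjoint open balls of $A$ (as a metric space) of radius $r$ contained in $A$. The numbers $\underline{\delta}_E(x)$, $\overline{\delta}_E(x)$ are the lower and upper tangential dimensions of $E$ at $x$. *)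

theory Defs
  imports "HOL-Analysis.Analysis" "HOL-Library.Extended_Nat"
begin

definition ncov :: "real \<Rightarrow> 'a::metric_space set \<Rightarrow> enat" where
  "ncov r A = Inf {enat (card C) | C. finite C \<and> A \<subseteq> (\<Union>c\<in>C. ball c r)}"

definition ncov_closed :: "real \<Rightarrow> 'a::metric_space set \<Rightarrow> enat" where
  "ncov_closed r A = Inf {enat (card C) | C. finite C \<and> A \<subseteq> (\<Union>c\<in>C. cball c r)}"

definition nu :: "real \<Rightarrow> 'a::metric_space set \<Rightarrow> enat" where
  "nu r A = Sup {enat (card C) | C. finite C \<and> C \<subseteq> A \<and>
     (\<forall>c\<in>C. \<forall>c'\<in>C. c \<noteq> c' \<longrightarrow>
        {z\<in>A. dist c z < r} \<inter> {z\<in>A. dist c' z < r} = {})}"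

definition logratio :: "enat \<Rightarrow> real \<Rightarrow> ereal" where
  "logratio m l = (case m of \<infinity> \<Rightarrow> \<infinity> | enat k \<Rightarrow> ereal (ln (real k) / ln (1 / l)))"

definition lower_tdim :: "(real \<Rightarrow> 'a set \<Rightarrow> enat) \<Rightarrow> (real \<Rightarrow> 'a set) \<Rightarrow> ereal" where
  "lower_tdim N S = Liminf (at_right 0) (\<lambda>l. Liminf (at_right 0) (\<lambda>r. logratio (N (l * r) (S r)) l))"

definition upper_tdim :: "(real \<Rightarrow> 'a set \<Rightarrow> enat) \<Rightarrow> (real \<Rightarrow> 'a set) \<Rightarrow> ereal" where
  "upper_tdim N S = Limsup (at_right 0) (\<lambda>l. Limsup (at_right 0) (\<lambda>r. logratio (N (l * r) (S r)) l))"

end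

(*
  All the counting functions involved agree up to a constant factor in the radius:
  n(s) <= nu(s/2) <= n(s/4), since a maximal packing is a cover by balls of twice the radius
  and distinct centres of a packing lie in distinct balls of a cover of half the radius;
  likewise n(s) <= nbar(s/2) <= n(s/2).  The sets E cap B(x,r), E cap Bbar(x,r) and
  E cap B(x,2r) are nested, with the closure of E cap B(x,r) in between the first two
  when E is closed.  Replacing lambda by a * lambda changes log(1/lambda) by a factor tending
  to 1 as lambda -> 0, and replacing r by b * r does not change a limit as r -> 0, so none of
  these comparisons affects the tangential dimensions.
*)
theory Submission
  imports Defs "HOL-Real_Asymp.Real_Asymp"
begin

lemma ncov_le_card:
  "finite C \<Longrightarrow> A \<subseteq> (\<Union>c\<in>C. ball c r) \<Longrightarrow> ncov r A \<le> enat (card C)"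
  unfolding ncov_def by (intro Inf_lower CollectI exI[of _ C]) simp

lemma le_ncovI:
  "(\<And>C. finite C \<Longrightarrow> A \<subseteq> (\<Union>c\<in>C. ball c r) \<Longrightarrow> m \<le> enat (card C)) \<Longrightarrow> m \<le> ncov r A"
  unfolding ncov_def by (rule Inf_greatest) (elim CollectE exE conjE, simp)

lemma ncov_closed_le_card:
  "finite C \<Longrightarrow> A \<subseteq> (\<Union>c\<in>C. cball c r) \<Longrightarrow> ncov_closed r A \<le> enat (card C)"
  unfolding ncov_closed_def by (intro Inf_lower CollectI exI[of _ C]) simp

lemma le_ncov_closedI:
  "(\<And>C. finite C \<Longrightarrow> A \<subseteq> (\<Union>c\<in>C. cball c r) \<Longrightarrow> m \<le> enat (card C)) \<Longrightarrow> m \<le> ncov_closed r A"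
  unfolding ncov_closed_def by (rule Inf_greatest) (elim CollectE exE conjE, simp)

lemma ncov_mono: "A \<subseteq> B \<Longrightarrow> ncov r A \<le> ncov r B"
  by (rule le_ncovI) (simp add: ncov_le_card subset_trans)

lemma ncov_closed_le_ncov: "ncov_closed r A \<le> ncov r A"
proof (rule le_ncovI)
  fix C assume "finite C" "A \<subseteq> (\<Union>c\<in>C. ball c r)"
  moreover have "(\<Union>c\<in>C. ball c r) \<subseteq> (\<Union>c\<in>C. cball c r)"
    by (intro UN_mono ball_subset_cball) simp
  ultimately show "ncov_closed r A \<le> enat (card C)"
    by (intro ncov_closed_le_card) (assumption, rule order_trans)
qed

lemma ncov_le_ncov_closed_half:
  assumes "0 < s"
  shows "ncov s A \<le> ncov_closed (s/2) A"
proof (rule le_ncov_closedI)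
  fix C assume "finite C" "A \<subseteq> (\<Union>c\<in>C. cball c (s/2))"
  moreover have "(\<Union>c\<in>C. cball c (s/2)) \<subseteq> (\<Union>c\<in>C. ball c s)"
    using assms by (intro UN_mono cball_subset_ball) auto
  ultimately show "ncov s A \<le> enat (card C)"
    by (intro ncov_le_card) (assumption, rule order_trans)
qed

definition packing :: "real \<Rightarrow> 'a::metric_space set \<Rightarrow> 'a set \<Rightarrow> bool" where
  "packing s A C \<longleftrightarrow> finite C \<and> C \<subseteq> A \<and>
     pairwise (\<lambda>c c'. {z\<in>A. dist c z < s} \<inter> {z\<in>A. dist c' z < s} = {}) C"

lemma nu_eq_Sup_packing: "nu s A = Sup {enat (card C) | C. packing s A C}"
  unfolding nu_def packing_def pairwise_def by simp

lemma packing_empty: "packing s A {}"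
  by (simp add: packing_def)

lemma packing_insert:
  assumes "packing s A C" "z \<in> A" "\<And>c. c \<in> C \<Longrightarrow> 2 * s \<le> dist c z"
  shows "packing s A (insert z C)"
proof -
  have "{w\<in>A. dist c w < s} \<inter> {w\<in>A. dist z w < s} = {}" if "c \<in> C" for c
  proof -
    have "\<not> (dist c w < s \<and> dist z w < s)" for w
      using assms(3)[OF that] dist_triangle2[of c z w] by linarith
    then show ?thesis by blast
  qed
  then show ?thesis
    using assms(1,2) by (auto simp: packing_def pairwise_insert)
qed

lemma packing_card_le_cover:
  assumes C: "packing s A C" and D: "finite D" "A \<subseteq> (\<Union>d\<in>D. ball d (s/2))"
  shows "card C \<le> card D"
proof -
  have "\<forall>c\<in>C. \<exists>d\<in>D. c \<in> ball d (s/2)"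
    using C D(2) unfolding packing_def by blast
  then obtain f where f: "\<And>c. c \<in> C \<Longrightarrow> f c \<in> D \<and> dist (f c) c < s/2"
    by (metis mem_ball)
  have "inj_on f C"
  proof (rule inj_onI, rule ccontr)
    fix c c' assume cc': "c \<in> C" "c' \<in> C" "f c = f c'" "c \<noteq> c'"
    have "dist c c' < s"
      using f[OF cc'(1)] f[OF cc'(2)] cc'(3) by (metis dist_triangle_half_r)
    moreover have "dist c' c' < s"
      using f[OF cc'(2)] by (metis dist_triangle_half_r)
    ultimately have "c' \<in> {z\<in>A. dist c z < s} \<inter> {z\<in>A. dist c' z < s}"
      using C cc'(2) by (auto simp: packing_def)
    moreover have "{z\<in>A. dist c z < s} \<inter> {z\<in>A. dist c' z < s} = {}"
      using C cc' unfolding packing_def pairwise_def by blast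
    ultimately show False
      by blast
  qed
  then show ?thesis
    using f D(1) by (intro card_inj_on_le) auto
qed

lemma nu_le_ncov_half: "nu s A \<le> ncov (s/2) A"
  unfolding nu_eq_Sup_packing
proof (intro Sup_least le_ncovI)
  fix m D assume "m \<in> {enat (card C) | C. packing s A C}" "finite D" "A \<subseteq> (\<Union>d\<in>D. ball d (s/2))"
  then show "m \<le> enat (card D)"
    using packing_card_le_cover by fastforce
qed

lemma nu_attained:
  assumes "nu s A \<noteq> \<infinity>"
  obtains C where "packing s A C" "nu s A = enat (card C)"
proof -
  define S where "S = {enat (card C) | C. packing s A C}"
  have "enat (card {}) \<in> S"
    unfolding S_def by (intro CollectI exI[of _ "{}"]) (simp add: packing_empty)
  moreover have "finite S"
    using assms unfolding nu_eq_Sup_packing S_def[symmetric] Sup_enat_def by (auto split: if_splits)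
  ultimately have "Sup S \<in> S"
    unfolding Sup_enat_def by auto
  then show ?thesis
    using that unfolding S_def nu_eq_Sup_packing by blast
qed

lemma ncov_le_nu_half:
  assumes "0 < s"
  shows "ncov s A \<le> nu (s/2) A"
proof (cases "nu (s/2) A = \<infinity>")
  case False
  then obtain C where C: "packing (s/2) A C" "nu (s/2) A = enat (card C)"
    by (rule nu_attained)
  have "A \<subseteq> (\<Union>c\<in>C. ball c s)"
  proof
    fix z assume "z \<in> A"
    show "z \<in> (\<Union>c\<in>C. ball c s)"
    proof (rule ccontr)
      assume "z \<notin> (\<Union>c\<in>C. ball c s)"
      then have far: "\<And>c. c \<in> C \<Longrightarrow> 2 * (s/2) \<le> dist c z"
        by (simp add: not_less)
      then have "z \<notin> C"
        using assms by force
      have "packing (s/2) A (insert z C)"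
        using C(1) \<open>z \<in> A\<close> far by (rule packing_insert)
      then have "enat (card (insert z C)) \<le> nu (s/2) A"
        unfolding nu_eq_Sup_packing by (intro Sup_upper) blast
      with \<open>z \<notin> C\<close> C show False
        by (simp add: packing_def)
    qed
  qed
  then show ?thesis
    using C by (simp add: packing_def ncov_le_card)
qed simp

lemma ln_of_nat_nonneg: "0 \<le> ln (real k)"
  by (cases "k = 0") auto

lemma ln_of_nat_mono: "k \<le> k' \<Longrightarrow> ln (real k) \<le> ln (real k')"
  by (cases "k = 0") (auto simp: ln_of_nat_nonneg)

lemma logratio_nonneg: "0 < l \<Longrightarrow> l < 1 \<Longrightarrow> 0 \<le> logratio m l"
  by (cases m) (auto simp: logratio_def ln_of_nat_nonneg intro!: divide_nonneg_pos)

lemma logratio_mono: "0 < l \<Longrightarrow> l < 1 \<Longrightarrow> m \<le> m' \<Longrightarrow> logratio m l \<le> logratio m' l"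
  by (cases m; cases m') (auto simp: logratio_def intro!: divide_right_mono ln_of_nat_mono)

lemma logratio_change_base:
  assumes "0 < l" "l < 1" "0 < l'" "l' < 1"
  shows "logratio m l = logratio m l' * ereal (ln (1/l') / ln (1/l))"
  using assms by (cases m) (auto simp: logratio_def)

lemma Liminf_at_right_0_rescale:
  "0 < b \<Longrightarrow> Liminf (at_right 0) (\<lambda>r. g (b * r)) = Liminf (at_right (0::real)) g"
  using Liminf_filtermap_eq[of "times b" "at_right 0" g] filtermap_times_pos_at_right[of b 0]
  by (auto simp: inj_on_def)

lemma Limsup_at_right_0_rescale:
  "0 < b \<Longrightarrow> Limsup (at_right 0) (\<lambda>r. g (b * r)) = Limsup (at_right (0::real)) g"
  using Limsup_filtermap_eq[of "times b" "at_right 0" g] filtermap_times_pos_at_right[of b 0]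
  by (auto simp: inj_on_def)

lemma eventually_mult_le_limit_factor:
  fixes G1 G2 :: "'b \<Rightarrow> ereal"
  assumes "(c \<longlongrightarrow> \<gamma>) F" "0 < \<gamma>" "0 \<le> z" "z < 1"
    and "\<forall>\<^sub>F t in F. G1 t \<le> G2 t * ereal (c t)" "\<forall>\<^sub>F t in F. 0 \<le> G2 t"
  shows "\<forall>\<^sub>F t in F. ereal z * G1 t \<le> G2 t * ereal \<gamma>"
proof -
  have "((\<lambda>t. z * c t) \<longlongrightarrow> z * \<gamma>) F"
    by (intro tendsto_mult_left assms(1))
  moreover have "z * \<gamma> < \<gamma>"
    using assms(2,4) by simp
  ultimately have "\<forall>\<^sub>F t in F. z * c t < \<gamma>"
    by (rule order_tendstoD(2))
  with assms(5,6) show ?thesis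
  proof eventually_elim
    case (elim t)
    have "ereal z * G1 t \<le> ereal z * (G2 t * ereal (c t))"
      using elim assms(3) by (intro ereal_mult_left_mono) auto
    also have "\<dots> = G2 t * (ereal z * ereal (c t))"
      by (rule mult.left_commute)
    also have "\<dots> = G2 t * ereal (z * c t)"
      by simp
    also have "\<dots> \<le> G2 t * ereal \<gamma>"
      using elim by (intro ereal_mult_left_mono) auto
    finally show ?case .
  qed
qed

lemma
  fixes G1 G2 :: "'b \<Rightarrow> ereal"
  assumes F: "F \<noteq> bot" and c: "(c \<longlongrightarrow> \<gamma>) F" "0 < \<gamma>"
    and le: "\<forall>\<^sub>F t in F. G1 t \<le> G2 t * ereal (c t)" and nonneg: "\<forall>\<^sub>F t in F. 0 \<le> G2 t"
  shows Liminf_le_mult_limit_factor: "Liminf F G1 \<le> Liminf F G2 * ereal \<gamma>"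
    and Limsup_le_mult_limit_factor: "Limsup F G1 \<le> Limsup F G2 * ereal \<gamma>"
proof -
  have scaled: "\<forall>\<^sub>F t in F. z * G1 t \<le> G2 t * ereal \<gamma>" if z: "0 < z" "z < 1" for z :: ereal
  proof -
    obtain r where r: "z = ereal r"
      using z by (cases z) auto
    with z have "0 \<le> r" "r < 1"
      by auto
    then show ?thesis
      unfolding r by (rule eventually_mult_le_limit_factor[OF c _ _ le nonneg])
  qed
  have "0 \<le> Liminf F G2"
    using nonneg by (rule Liminf_bounded)
  then have "Liminf F G2 * ereal \<gamma> \<noteq> -\<infinity>"
    using c(2) by (cases "Liminf F G2") auto
  then show "Liminf F G1 \<le> Liminf F G2 * ereal \<gamma>"
  proof (rule ereal_le_mult_one_interval)
    fix z :: ereal assume z: "0 < z" "z < 1"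
    have "z * Liminf F G1 = Liminf F (\<lambda>t. z * G1 t)"
      using F z by (cases z) (auto simp: Liminf_ereal_mult_left)
    also have "\<dots> \<le> Liminf F (\<lambda>t. G2 t * ereal \<gamma>)"
      using scaled[OF z] by (rule Liminf_mono)
    also have "\<dots> = Liminf F G2 * ereal \<gamma>"
      using F c(2) by (simp add: Liminf_ereal_mult_right)
    finally show "z * Liminf F G1 \<le> Liminf F G2 * ereal \<gamma>" .
  qed
  have "0 \<le> Limsup F G2"
    using F nonneg by (rule le_Limsup)
  then have "Limsup F G2 * ereal \<gamma> \<noteq> -\<infinity>"
    using c(2) by (cases "Limsup F G2") auto
  then show "Limsup F G1 \<le> Limsup F G2 * ereal \<gamma>"
  proof (rule ereal_le_mult_one_interval)
    fix z :: ereal assume z: "0 < z" "z < 1"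
    have "z * Limsup F G1 = Limsup F (\<lambda>t. z * G1 t)"
      using F z by (cases z) (auto simp: Limsup_ereal_mult_left)
    also have "\<dots> \<le> Limsup F (\<lambda>t. G2 t * ereal \<gamma>)"
      using scaled[OF z] by (rule Limsup_mono)
    also have "\<dots> = Limsup F G2 * ereal \<gamma>"
      using F c(2) by (simp add: Limsup_ereal_mult_right)
    finally show "z * Limsup F G1 \<le> Limsup F G2 * ereal \<gamma>" .
  qed
qed

definition lower_tdim_at :: "(real \<Rightarrow> 'a set \<Rightarrow> enat) \<Rightarrow> (real \<Rightarrow> 'a set) \<Rightarrow> real \<Rightarrow> ereal" where
  "lower_tdim_at N S l = Liminf (at_right 0) (\<lambda>r. logratio (N (l * r) (S r)) l)"

definition upper_tdim_at :: "(real \<Rightarrow> 'a set \<Rightarrow> enat) \<Rightarrow> (real \<Rightarrow> 'a set) \<Rightarrow> real \<Rightarrow> ereal" where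
  "upper_tdim_at N S l = Limsup (at_right 0) (\<lambda>r. logratio (N (l * r) (S r)) l)"

lemma lower_tdim_eq: "lower_tdim N S = Liminf (at_right 0) (lower_tdim_at N S)"
  by (simp add: lower_tdim_def lower_tdim_at_def[abs_def])

lemma upper_tdim_eq: "upper_tdim N S = Limsup (at_right 0) (upper_tdim_at N S)"
  by (simp add: upper_tdim_def upper_tdim_at_def[abs_def])

lemma tdim_at_nonneg:
  assumes "0 < l" "l < 1"
  shows "0 \<le> lower_tdim_at N S l \<and> 0 \<le> upper_tdim_at N S l"
proof -
  have "\<forall>\<^sub>F r in at_right 0. 0 \<le> logratio (N (l * r) (S r)) l"
    using assms by (simp add: logratio_nonneg)
  then show ?thesis
    unfolding lower_tdim_at_def upper_tdim_at_def by (simp add: Liminf_bounded le_Limsup)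
qed

lemma tdim_at_le_of_rescaled_bound:
  fixes N1 N2 :: "real \<Rightarrow> 'a set \<Rightarrow> enat" and S1 S2 :: "real \<Rightarrow> 'a set"
  assumes a: "0 < a" and b: "0 < b" and \<delta>: "0 < \<delta>"
    and bound: "\<And>r. 0 < r \<Longrightarrow> r < \<delta> \<Longrightarrow> N1 (l * r) (S1 r) \<le> N2 (a * l * (b * r)) (S2 (b * r))"
    and l: "0 < l" "l < 1" "a * l < 1"
  defines "c \<equiv> ln (1 / (a * l)) / ln (1 / l)"
  shows "lower_tdim_at N1 S1 l \<le> lower_tdim_at N2 S2 (a * l) * ereal c
    \<and> upper_tdim_at N1 S1 l \<le> upper_tdim_at N2 S2 (a * l) * ereal c"
proof -
  define F1 where "F1 r = logratio (N1 (l * r) (S1 r)) l" for r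
  define F2 where "F2 r = logratio (N2 (a * l * r) (S2 r)) (a * l)" for r
  have "0 < c"
    using l a by (simp add: c_def)
  have ev_le: "\<forall>\<^sub>F r in at_right 0. F1 r \<le> F2 (b * r) * ereal c"
    using eventually_at_right_real[OF \<delta>]
  proof eventually_elim
    case (elim r)
    have "F1 r \<le> logratio (N2 (a * l * (b * r)) (S2 (b * r))) l"
      unfolding F1_def using l elim by (intro logratio_mono bound) auto
    also have "\<dots> = F2 (b * r) * ereal c"
      unfolding F2_def c_def using l a by (intro logratio_change_base) auto
    finally show ?case .
  qed
  have ev_nonneg: "\<forall>\<^sub>F r in at_right 0. 0 \<le> F2 (b * r)"
    using l a by (simp add: F2_def logratio_nonneg)
  have "Liminf (at_right 0) F1 \<le> Liminf (at_right 0) (\<lambda>r. F2 (b * r)) * ereal c"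
    by (rule Liminf_le_mult_limit_factor[OF _ tendsto_const \<open>0 < c\<close> ev_le ev_nonneg]) simp
  moreover have "Limsup (at_right 0) F1 \<le> Limsup (at_right 0) (\<lambda>r. F2 (b * r)) * ereal c"
    by (rule Limsup_le_mult_limit_factor[OF _ tendsto_const \<open>0 < c\<close> ev_le ev_nonneg]) simp
  ultimately show ?thesis
    unfolding lower_tdim_at_def upper_tdim_at_def F1_def[symmetric] mult.assoc[of a l]
      F2_def[unfolded mult.assoc, symmetric]
    by (simp only: Liminf_at_right_0_rescale[OF b] Limsup_at_right_0_rescale[OF b])
qed

lemma tdim_le_of_rescaled_bound:
  fixes N1 N2 :: "real \<Rightarrow> 'a set \<Rightarrow> enat" and S1 S2 :: "real \<Rightarrow> 'a set"
  assumes a: "0 < a" and b: "0 < b" and \<delta>: "0 < \<delta>"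
    and bound: "\<And>l r. 0 < l \<Longrightarrow> l < \<delta> \<Longrightarrow> 0 < r \<Longrightarrow> r < \<delta> \<Longrightarrow>
      N1 (l * r) (S1 r) \<le> N2 (a * l * (b * r)) (S2 (b * r))"
  shows "lower_tdim N1 S1 \<le> lower_tdim N2 S2 \<and> upper_tdim N1 S1 \<le> upper_tdim N2 S2"
proof -
  define c where "c l = ln (1 / (a * l)) / ln (1 / l)" for l
  have small: "\<forall>\<^sub>F l in at_right 0. 0 < l \<and> l < \<delta> \<and> l < 1 \<and> a * l < 1"
    using eventually_at_right_real[of 0 "min (min \<delta> 1) (1 / a)"] \<delta> a
    by (auto elim!: eventually_mono simp: field_simps)
  have c: "(c \<longlongrightarrow> 1) (at_right 0)"
    unfolding c_def using a by real_asymp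
  have ev_le: "\<forall>\<^sub>F l in at_right 0.
      lower_tdim_at N1 S1 l \<le> lower_tdim_at N2 S2 (a * l) * ereal (c l)
    \<and> upper_tdim_at N1 S1 l \<le> upper_tdim_at N2 S2 (a * l) * ereal (c l)"
    using small unfolding c_def
    by eventually_elim (rule tdim_at_le_of_rescaled_bound[OF a b \<delta>], auto intro: bound)
  have ev_nonneg: "\<forall>\<^sub>F l in at_right 0.
      0 \<le> lower_tdim_at N2 S2 (a * l) \<and> 0 \<le> upper_tdim_at N2 S2 (a * l)"
    using small by eventually_elim (use a in \<open>simp add: tdim_at_nonneg\<close>)
  have "Liminf (at_right 0) (lower_tdim_at N1 S1)
      \<le> Liminf (at_right 0) (\<lambda>l. lower_tdim_at N2 S2 (a * l)) * ereal 1"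
    by (rule Liminf_le_mult_limit_factor[OF _ c])
      (use ev_le ev_nonneg in \<open>auto elim: eventually_mono\<close>)
  moreover have "Limsup (at_right 0) (upper_tdim_at N1 S1)
      \<le> Limsup (at_right 0) (\<lambda>l. upper_tdim_at N2 S2 (a * l)) * ereal 1"
    by (rule Limsup_le_mult_limit_factor[OF _ c])
      (use ev_le ev_nonneg in \<open>auto elim: eventually_mono\<close>)
  ultimately show ?thesis
    by (simp add: lower_tdim_eq upper_tdim_eq Liminf_at_right_0_rescale[OF a]
        Limsup_at_right_0_rescale[OF a])
qed

lemma ncov_tdim_mono:
  assumes "\<And>r. 0 < r \<Longrightarrow> S1 r \<subseteq> S2 r"
  shows "lower_tdim ncov S1 \<le> lower_tdim ncov S2 \<and> upper_tdim ncov S1 \<le> upper_tdim ncov S2"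
  by (rule tdim_le_of_rescaled_bound[of 1 1 1]) (simp_all add: assms ncov_mono)

theorem proposition3p2:
  fixes E :: "'a::metric_space set" and x :: 'a
  assumes "x \<in> E"
  shows "lower_tdim nu (\<lambda>r. E \<inter> cball x r) = lower_tdim ncov (\<lambda>r. E \<inter> cball x r)
       \<and> upper_tdim nu (\<lambda>r. E \<inter> cball x r) = upper_tdim ncov (\<lambda>r. E \<inter> cball x r)
       \<and> lower_tdim ncov_closed (\<lambda>r. E \<inter> cball x r) = lower_tdim ncov (\<lambda>r. E \<inter> cball x r)
       \<and> upper_tdim ncov_closed (\<lambda>r. E \<inter> cball x r) = upper_tdim ncov (\<lambda>r. E \<inter> cball x r)
       \<and> lower_tdim ncov (\<lambda>r. E \<inter> ball x r) = lower_tdim ncov (\<lambda>r. E \<inter> cball x r)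
       \<and> upper_tdim ncov (\<lambda>r. E \<inter> ball x r) = upper_tdim ncov (\<lambda>r. E \<inter> cball x r)
       \<and> (closed E \<longrightarrow>
            lower_tdim ncov (\<lambda>r. closure (E \<inter> ball x r)) = lower_tdim ncov (\<lambda>r. E \<inter> cball x r)
          \<and> upper_tdim ncov (\<lambda>r. closure (E \<inter> ball x r)) = upper_tdim ncov (\<lambda>r. E \<inter> cball x r))"
proof -
  define Sc where "Sc r = E \<inter> cball x r" for r
  define Sb where "Sb r = E \<inter> ball x r" for r
  have "lower_tdim nu Sc \<le> lower_tdim ncov Sc \<and> upper_tdim nu Sc \<le> upper_tdim ncov Sc"
    by (rule tdim_le_of_rescaled_bound[of "1/2" 1 1]) (simp_all add: nu_le_ncov_half)
  moreover have "lower_tdim ncov Sc \<le> lower_tdim nu Sc \<and> upper_tdim ncov Sc \<le> upper_tdim nu Sc"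
    by (rule tdim_le_of_rescaled_bound[of "1/2" 1 1]) (simp_all add: ncov_le_nu_half)
  moreover have "lower_tdim ncov_closed Sc \<le> lower_tdim ncov Sc \<and> upper_tdim ncov_closed Sc \<le> upper_tdim ncov Sc"
    by (rule tdim_le_of_rescaled_bound[of 1 1 1]) (simp_all add: ncov_closed_le_ncov)
  moreover have "lower_tdim ncov Sc \<le> lower_tdim ncov_closed Sc \<and> upper_tdim ncov Sc \<le> upper_tdim ncov_closed Sc"
    by (rule tdim_le_of_rescaled_bound[of "1/2" 1 1]) (simp_all add: ncov_le_ncov_closed_half)
  moreover have "lower_tdim ncov Sb \<le> lower_tdim ncov Sc \<and> upper_tdim ncov Sb \<le> upper_tdim ncov Sc"
    by (rule ncov_tdim_mono) (auto simp: Sb_def Sc_def)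
  moreover have "lower_tdim ncov Sc \<le> lower_tdim ncov Sb \<and> upper_tdim ncov Sc \<le> upper_tdim ncov Sb"
    by (rule tdim_le_of_rescaled_bound[of "1/2" 2 1]) (auto simp: Sb_def Sc_def intro!: ncov_mono)
  moreover have "lower_tdim ncov Sb \<le> lower_tdim ncov (\<lambda>r. closure (Sb r))
      \<and> upper_tdim ncov Sb \<le> upper_tdim ncov (\<lambda>r. closure (Sb r))"
    by (rule ncov_tdim_mono) (simp add: closure_subset)
  moreover have "lower_tdim ncov (\<lambda>r. closure (Sb r)) \<le> lower_tdim ncov Sc
      \<and> upper_tdim ncov (\<lambda>r. closure (Sb r)) \<le> upper_tdim ncov Sc" if "closed E"
    by (rule ncov_tdim_mono, rule closure_minimal) (use that in \<open>auto simp: Sb_def Sc_def\<close>)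
  ultimately show ?thesis
    unfolding Sc_def Sb_def by (meson antisym order_trans)
qed

end
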